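(* Let $X$ be a finite cycle set and $x\in X$. The following are equivalent: (1) $X=\langle x\rangle$; (2) there is a finite brace $B$ such that $X\subseteq B$ (with the cycle set structure of $X$ being the one induced from $B$), $X=\{\lambda_b(x) : b\in B\}$, and $B=B(x)$.
   Context: A cycle set is a non-empty set $X$ with one operation $\cdot$ such that each $\sigma_x:y\mapsto x\cdot y$ is bijective and $(x\cdot y)\cdot(x\cdot z)=(y\cdot x)\cdot(y\cdot z)$ for all $x,y,z$. A sub-cycle set is a subset that is again a cycle set under the restricted operation; $\langle x\rangle$ is the smallest sub-cycle set containing $x$. A brace is a triple $(B,+,\circ)$ with $(B,+)$ an abelian group, $(B,\circ)$ a group, and $a\circ(b+c)=a\circ b-a+a\circ c$; $\lambda_a(b):=-a+a\circ b$, $a^-$ is the inverse of $a$ in $(B,\circ)$, and $B$ is a cycle set via $a\cdot b:=\lambda_{a^-}(b)$. $B(x)$ is the smallest subset of $B$ containing $x$ that is a subgroup of both $(B,+)$ and $(B,\circ)$. *)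

theory Defs
  imports "HOL-Algebra.Algebra"
begin

definition cycle_set :: "'a set \<Rightarrow> ('a \<Rightarrow> 'a \<Rightarrow> 'a) \<Rightarrow> bool" where
  "cycle_set Cs opr \<longleftrightarrow>
     Cs \<noteq> {} \<and>
     (\<forall>x\<in>Cs. \<forall>y\<in>Cs. opr x y \<in> Cs) \<and>
     (\<forall>x\<in>Cs. bij_betw (opr x) Cs Cs) \<and>
     (\<forall>x\<in>Cs. \<forall>y\<in>Cs. \<forall>z\<in>Cs. opr (opr x y) (opr x z) = opr (opr y x) (opr y z))"

definition sub_cycle_set :: "'a set \<Rightarrow> 'a set \<Rightarrow> ('a \<Rightarrow> 'a \<Rightarrow> 'a) \<Rightarrow> bool" where
  "sub_cycle_set Y Cs opr \<longleftrightarrow> Y \<subseteq> Cs \<and> cycle_set Y opr"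

definition gen_cycle :: "'a set \<Rightarrow> ('a \<Rightarrow> 'a \<Rightarrow> 'a) \<Rightarrow> 'a \<Rightarrow> 'a set" where
  "gen_cycle Cs opr x = \<Inter>{Y. sub_cycle_set Y Cs opr \<and> x \<in> Y}"

text \<open>A brace is given as a ring-like record R: (carrier R, additive part) an abelian
group, (carrier R, multiplicative part = circ) a group, and
a o (b + c) = a o b - a + a o c.\<close>
definition brace :: "('b, 'm) ring_scheme \<Rightarrow> bool" where
  "brace R \<longleftrightarrow> abelian_group R \<and> group R \<and>
     (\<forall>a\<in>carrier R. \<forall>b\<in>carrier R. \<forall>c\<in>carrier R.
        a \<otimes>\<^bsub>R\<^esub> (b \<oplus>\<^bsub>R\<^esub> c) =
        ((a \<otimes>\<^bsub>R\<^esub> b) \<oplus>\<^bsub>R\<^esub> (\<ominus>\<^bsub>R\<^esub> a)) \<oplus>\<^bsub>R\<^esub> (a \<otimes>\<^bsub>R\<^esub> c))"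

definition brace_lambda :: "('b, 'm) ring_scheme \<Rightarrow> 'b \<Rightarrow> 'b \<Rightarrow> 'b" where
  "brace_lambda R a b = (\<ominus>\<^bsub>R\<^esub> a) \<oplus>\<^bsub>R\<^esub> (a \<otimes>\<^bsub>R\<^esub> b)"

definition brace_cycle_op :: "('b, 'm) ring_scheme \<Rightarrow> 'b \<Rightarrow> 'b \<Rightarrow> 'b" where
  "brace_cycle_op R a b = brace_lambda R (inv\<^bsub>R\<^esub> a) b"

definition brace_gen :: "('b, 'm) ring_scheme \<Rightarrow> 'b \<Rightarrow> 'b set" where
  "brace_gen R x = \<Inter>{S. x \<in> S \<and> additive_subgroup S R \<and> subgroup S R}"

end

theory Submission
  imports Defs "HOL-Combinatorics.Cycles"
begin

text \<open>
  Both directions rest on one fact about a finite brace B: if Y \<subseteq> B is closed under the cycle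
  operation and x \<in> Y, then \<lambda>_b(x) \<in> Y for all b \<in> B(x). The additive span of Y is
  closed under + and under a \<circ> c = a + \<lambda>_a(c), so by finiteness it is a sub-brace containing
  x and hence B(x); and it acts on Y because \<lambda>_{y+s} = \<lambda>_y \<circ> \<lambda>_t with t = \<lambda>_{y^-}(s).
  With Y = \<langle>x\<rangle> this gives (2) \<Longrightarrow> (1). For (1) \<Longrightarrow> (2) it suffices to embed X into
  some finite brace B and to restrict B to B(x): the elements of X lying in B(x), resp. in the
  \<lambda>-orbit of x, form closed subsets containing x, hence all of X = \<langle>x\<rangle>.

  The finite brace is a quotient of the structure brace of X, the monoid of multisets over X
  with M \<circ> N = M + \<lambda>_M(N): multiplicities are reduced modulo some d with \<lambda>_{d y} = id for
  all generators y. Since the squaring map of a finite cycle set is bijective (Rump),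
  \<lambda>_{k y}^-1(y) is the k-th power of that permutation applied to y; this gives
  \<lambda>_{N k y} = (\<lambda>_{N y})^k for a common period N of all permutations of X, so d = 2 N^2
  works.
\<close>

section \<open>Braces\<close>

lemma (in group) finite_submonoid_subgroupI:
  assumes fin: "finite H" and sub: "H \<subseteq> carrier G" and one: "\<one> \<in> H"
    and mult: "\<And>a b. a \<in> H \<Longrightarrow> b \<in> H \<Longrightarrow> a \<otimes> b \<in> H"
  shows "subgroup H G"
proof (rule subgroupI[OF sub])
  show "H \<noteq> {}" using one by blast
  show "a \<otimes> b \<in> H" if "a \<in> H" "b \<in> H" for a b using mult that .
  show "inv a \<in> H" if a: "a \<in> H" for a
  proof -
    have a': "a \<in> carrier G" using a sub by blast
    have "inj_on (\<lambda>c. a \<otimes> c) H" using inj_on_subset[OF inj_on_cmult[OF a'] sub] .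
    then have "(\<lambda>c. a \<otimes> c) ` H = H" using mult[OF a] fin by (intro endo_inj_surj) auto
    then obtain c where c: "c \<in> H" "a \<otimes> c = \<one>" using one by (metis imageE)
    have c': "c \<in> carrier G" using c sub by blast
    have "inv a = inv a \<otimes> (a \<otimes> c)" using c(2) a' by simp
    also have "\<dots> = c" using a' c' by (simp add: m_assoc[symmetric])
    finally show ?thesis using c by simp
  qed
qed

locale brace_locale = abelian_group R + group R for R (structure) +
  assumes distr: "\<And>a b c. a \<in> carrier R \<Longrightarrow> b \<in> carrier R \<Longrightarrow> c \<in> carrier R \<Longrightarrow>
        a \<otimes> (b \<oplus> c) = ((a \<otimes> b) \<oplus> (\<ominus> a)) \<oplus> (a \<otimes> c)"

lemma brace_iff_brace_locale: "brace R \<longleftrightarrow> brace_locale R"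
  unfolding brace_def brace_locale_def brace_locale_axioms_def by auto

context brace_locale
begin

abbreviation lam where "lam \<equiv> brace_lambda R"

lemma minus_one: "\<ominus> \<one> = \<zero>"
proof -
  have "\<one> \<otimes> (\<zero> \<oplus> \<zero>) = ((\<one> \<otimes> \<zero>) \<oplus> (\<ominus> \<one>)) \<oplus> (\<one> \<otimes> \<zero>)"
    by (rule distr) auto
  then show ?thesis by simp
qed

lemma zero_eq_one: "\<zero> = \<one>"
proof -
  have "\<one> \<oplus> \<ominus> \<one> = \<zero>" by (simp add: r_neg)
  then show ?thesis by (simp add: minus_one)
qed

lemma lam_closed [simp]: "a \<in> carrier R \<Longrightarrow> b \<in> carrier R \<Longrightarrow> lam a b \<in> carrier R"
  unfolding brace_lambda_def by simp

lemma mult_eq_add_lam: "a \<in> carrier R \<Longrightarrow> b \<in> carrier R \<Longrightarrow> a \<otimes> b = a \<oplus> lam a b"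
  unfolding brace_lambda_def by (simp add: r_neg2)

lemma lam_add:
  "a \<in> carrier R \<Longrightarrow> b \<in> carrier R \<Longrightarrow> c \<in> carrier R \<Longrightarrow> lam a (b \<oplus> c) = lam a b \<oplus> lam a c"
  unfolding brace_lambda_def using distr by (simp add: a_ac)

lemma lam_zero: "a \<in> carrier R \<Longrightarrow> lam a \<zero> = \<zero>"
  unfolding brace_lambda_def by (simp add: zero_eq_one l_neg)

lemma lam_minus:
  assumes a: "a \<in> carrier R" and b: "b \<in> carrier R"
  shows "lam a (\<ominus> b) = \<ominus> lam a b"
proof -
  have "lam a (\<ominus> b) \<oplus> lam a b = \<zero>"
    using a b by (simp add: lam_add[symmetric] l_neg lam_zero)
  then show ?thesis using a b by (simp add: minus_equality)
qed

lemma lam_one: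
  assumes b: "b \<in> carrier R"
  shows "lam \<one> b = b"
proof -
  have "lam \<one> b = \<ominus> \<one> \<oplus> b" using b by (simp add: brace_lambda_def)
  also have "\<ominus> \<one> = \<zero>" by (rule minus_one)
  finally show ?thesis using b by simp
qed

lemma lam_mult:
  assumes a: "a \<in> carrier R" and b: "b \<in> carrier R" and c: "c \<in> carrier R"
  shows "lam (a \<otimes> b) c = lam a (lam b c)"
proof -
  have "lam a (lam b c) = \<ominus> (lam a b) \<oplus> lam a (b \<otimes> c)"
    unfolding brace_lambda_def[of R b c] using a b c by (simp add: lam_add lam_minus)
  also have "\<dots> = \<ominus> (\<ominus> a \<oplus> a \<otimes> b) \<oplus> (\<ominus> a \<oplus> a \<otimes> (b \<otimes> c))"
    unfolding brace_lambda_def by simp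
  also have "\<dots> = \<ominus> (a \<otimes> b) \<oplus> (a \<otimes> b) \<otimes> c"
    using a b c by (simp add: minus_add m_assoc a_ac r_neg1 r_neg2)
  finally show ?thesis unfolding brace_lambda_def by simp
qed

lemma lam_inv_cancel: "a \<in> carrier R \<Longrightarrow> c \<in> carrier R \<Longrightarrow> lam a (lam (inv a) c) = c"
  by (simp add: lam_mult[symmetric] lam_one)

lemma lam_add_left:
  assumes "a \<in> carrier R" "b \<in> carrier R" "c \<in> carrier R"
  shows "lam (a \<oplus> b) c = lam a (lam (lam (inv a) b) c)"
proof -
  have "a \<oplus> b = a \<otimes> lam (inv a) b" using assms by (simp add: mult_eq_add_lam lam_inv_cancel)
  then show ?thesis using assms by (simp add: lam_mult)
qed

end

primrec list_sum :: "('b, 'm) ring_scheme \<Rightarrow> 'b list \<Rightarrow> 'b" where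
  "list_sum R [] = \<zero>\<^bsub>R\<^esub>"
| "list_sum R (y # ys) = y \<oplus>\<^bsub>R\<^esub> list_sum R ys"

definition add_closure :: "('b, 'm) ring_scheme \<Rightarrow> 'b set \<Rightarrow> 'b set" where
  "add_closure R Y = {list_sum R ys | ys. set ys \<subseteq> Y}"

lemma mem_add_closure: "a \<in> add_closure R Y \<longleftrightarrow> (\<exists>ys. a = list_sum R ys \<and> set ys \<subseteq> Y)"
  unfolding add_closure_def by blast

lemma brace_gen_least:
  "x \<in> S \<Longrightarrow> additive_subgroup S R \<Longrightarrow> subgroup S R \<Longrightarrow> brace_gen R x \<subseteq> S"
  unfolding brace_gen_def by blast

context brace_locale
begin

lemma list_sum_closed: "set ys \<subseteq> carrier R \<Longrightarrow> list_sum R ys \<in> carrier R"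
  by (induction ys) auto

lemma list_sum_append:
  "set xs \<subseteq> carrier R \<Longrightarrow> set ys \<subseteq> carrier R \<Longrightarrow> list_sum R (xs @ ys) = list_sum R xs \<oplus> list_sum R ys"
  by (induction xs) (auto simp: list_sum_closed a_assoc)

lemma lam_list_sum:
  "a \<in> carrier R \<Longrightarrow> set ys \<subseteq> carrier R \<Longrightarrow> lam a (list_sum R ys) = list_sum R (map (lam a) ys)"
  by (induction ys) (auto simp: lam_zero lam_add list_sum_closed)

lemma lam_closed_if_cycle_closed:
  assumes fin: "finite Y" and Y: "Y \<subseteq> carrier R"
    and closed: "\<And>y z. y \<in> Y \<Longrightarrow> z \<in> Y \<Longrightarrow> brace_cycle_op R y z \<in> Y"
    and y: "y \<in> Y" and z: "z \<in> Y"
  shows "lam y z \<in> Y"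
proof -
  have y': "y \<in> carrier R" using y Y by blast
  have "inj_on (lam (inv y)) Y"
    by (rule inj_onI) (metis lam_inv_cancel y' Y subsetD)
  moreover have "lam (inv y) ` Y \<subseteq> Y" using closed[OF y] by (auto simp: brace_cycle_op_def)
  ultimately have "lam (inv y) ` Y = Y" using fin by (intro endo_inj_surj)
  then obtain w where "w \<in> Y" "z = lam (inv y) w" using z by force
  then show ?thesis using lam_inv_cancel y' Y by auto
qed

lemma lam_list_sum_closed:
  assumes fin: "finite Y" and Y: "Y \<subseteq> carrier R"
    and closed: "\<And>y z. y \<in> Y \<Longrightarrow> z \<in> Y \<Longrightarrow> brace_cycle_op R y z \<in> Y"
  shows "set ys \<subseteq> Y \<Longrightarrow> z \<in> Y \<Longrightarrow> lam (list_sum R ys) z \<in> Y"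
proof (induction "length ys" arbitrary: ys z rule: less_induct)
  case less
  show ?case
  proof (cases ys)
    case Nil
    then show ?thesis using less.prems Y by (auto simp: zero_eq_one lam_one)
  next
    case (Cons y ys')
    have y: "y \<in> Y" and ys': "set ys' \<subseteq> Y" using less.prems Cons by auto
    have y': "y \<in> carrier R" and ys'': "set ys' \<subseteq> carrier R" using y ys' Y by auto
    define zs where "zs = map (lam (inv y)) ys'"
    have "set zs \<subseteq> Y" using ys' closed[OF y] by (auto simp: zs_def brace_cycle_op_def)
    then have "lam (list_sum R zs) z \<in> Y" using less.hyps[of zs] less.prems(2) Cons
      by (simp add: zs_def)
    moreover have "lam (list_sum R ys) z = lam y (lam (list_sum R zs) z)"
      using Cons y' ys'' less.prems(2) Y
      by (auto simp: zs_def lam_add_left lam_list_sum list_sum_closed)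
    ultimately show ?thesis using lam_closed_if_cycle_closed[OF fin Y closed y] by simp
  qed
qed

lemma add_closure_sub_brace:
  assumes fin: "finite (carrier R)" and Y: "Y \<subseteq> carrier R"
    and closed: "\<And>y z. y \<in> Y \<Longrightarrow> z \<in> Y \<Longrightarrow> brace_cycle_op R y z \<in> Y"
  shows "additive_subgroup (add_closure R Y) R" "subgroup (add_closure R Y) R"
proof -
  define A where "A = add_closure R Y"
  have A: "A \<subseteq> carrier R" unfolding A_def using Y list_sum_closed by (auto simp: mem_add_closure)
  have finA: "finite A" using fin A finite_subset by blast
  have zero: "\<zero> \<in> A" unfolding A_def mem_add_closure by (auto intro!: exI[of _ "[]"])
  have add: "a \<oplus> c \<in> A" if ac: "a \<in> A" "c \<in> A" for a c
  proof -
    obtain xs ys where "a = list_sum R xs" "set xs \<subseteq> Y" "c = list_sum R ys" "set ys \<subseteq> Y"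
      using ac unfolding A_def mem_add_closure by blast
    then show ?thesis unfolding A_def mem_add_closure using Y
      by (auto intro!: exI[of _ "xs @ ys"] simp: list_sum_append)
  qed
  have lam: "lam a c \<in> A" if a: "a \<in> A" and c: "c \<in> A" for a c
  proof -
    obtain ys where ys: "c = list_sum R ys" "set ys \<subseteq> Y" using c unfolding A_def mem_add_closure
      by blast
    have "lam a c = list_sum R (map (lam a) ys)" using ys a A Y by (auto simp: lam_list_sum)
    moreover have "set (map (lam a) ys) \<subseteq> Y"
      using ys a lam_list_sum_closed[OF finite_subset[OF Y fin] Y closed]
      unfolding A_def mem_add_closure by auto
    ultimately show ?thesis unfolding A_def mem_add_closure by blast
  qed
  show "additive_subgroup A R"
    by (intro additive_subgroupI add.finite_submonoid_subgroupI finA A zero add)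
  show "subgroup A R"
    by (rule finite_submonoid_subgroupI[OF finA A])
      (use zero add lam A in \<open>auto simp: zero_eq_one[symmetric] mult_eq_add_lam subset_iff\<close>)
qed

lemma lam_brace_gen_closed:
  assumes fin: "finite (carrier R)" and Y: "Y \<subseteq> carrier R"
    and closed: "\<And>y z. y \<in> Y \<Longrightarrow> z \<in> Y \<Longrightarrow> brace_cycle_op R y z \<in> Y"
    and x: "x \<in> Y" and b: "b \<in> brace_gen R x"
  shows "lam b x \<in> Y"
proof -
  have "x \<in> add_closure R Y"
    unfolding mem_add_closure using x Y by (intro exI[of _ "[x]"]) auto
  then have "brace_gen R x \<subseteq> add_closure R Y"
    by (rule brace_gen_least[OF _ add_closure_sub_brace[OF fin Y closed]])
  then have "b \<in> add_closure R Y" using b by blast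
  then obtain ys where "b = list_sum R ys" "set ys \<subseteq> Y" unfolding mem_add_closure by blast
  then show ?thesis using lam_list_sum_closed[OF finite_subset[OF Y fin] Y closed _ x] by simp
qed


lemma sub_brace:
  assumes add: "additive_subgroup H R" and mult: "subgroup H R"
  shows "brace (R\<lparr>carrier := H\<rparr>)"
    and "\<And>a b. a \<in> H \<Longrightarrow> b \<in> H \<Longrightarrow> brace_lambda (R\<lparr>carrier := H\<rparr>) a b = lam a b"
    and "\<And>a b. a \<in> H \<Longrightarrow> b \<in> H \<Longrightarrow> brace_cycle_op (R\<lparr>carrier := H\<rparr>) a b = brace_cycle_op R a b"
proof -
  have H: "H \<subseteq> carrier R" using subgroup.subset[OF mult] .
  have minus: "\<ominus>\<^bsub>R\<lparr>carrier := H\<rparr>\<^esub> a = \<ominus> a" if "a \<in> H" for a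
    using add.m_inv_consistent[OF additive_subgroup.a_subgroup[OF add] that]
    by (simp add: a_inv_def)
  have inv: "inv\<^bsub>R\<lparr>carrier := H\<rparr>\<^esub> a = inv a" if "a \<in> H" for a
    using m_inv_consistent[OF mult that] .
  have "abelian_group (R\<lparr>carrier := H\<rparr>)"
  proof (rule abelian_groupI, simp_all)
    show "\<And>x y. x \<in> H \<Longrightarrow> y \<in> H \<Longrightarrow> x \<oplus> y \<in> H" using additive_subgroup.a_closed[OF add] .
    show "\<zero> \<in> H" using additive_subgroup.zero_closed[OF add] .
    show "\<And>x y z. x \<in> H \<Longrightarrow> y \<in> H \<Longrightarrow> z \<in> H \<Longrightarrow> x \<oplus> y \<oplus> z = x \<oplus> (y \<oplus> z)"
      using H by (meson a_assoc subsetD)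
    show "\<And>x y. x \<in> H \<Longrightarrow> y \<in> H \<Longrightarrow> x \<oplus> y = y \<oplus> x" using H by (meson a_comm subsetD)
    show "\<And>x. x \<in> H \<Longrightarrow> \<zero> \<oplus> x = x" using H by auto
    show "\<And>x. x \<in> H \<Longrightarrow> \<exists>y\<in>H. y \<oplus> x = \<zero>"
      using H additive_subgroup.a_inv_closed[OF add] by (meson l_neg subsetD)
  qed
  moreover have "group (R\<lparr>carrier := H\<rparr>)" by (rule subgroup.subgroup_is_group[OF mult is_group])
  ultimately show "brace (R\<lparr>carrier := H\<rparr>)"
    unfolding brace_def using H minus by (auto simp: distr subset_iff)
  show lam: "brace_lambda (R\<lparr>carrier := H\<rparr>) a b = lam a b" if "a \<in> H" "b \<in> H" for a b
    using that minus unfolding brace_lambda_def by simp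
  show "brace_cycle_op (R\<lparr>carrier := H\<rparr>) a b = brace_cycle_op R a b" if "a \<in> H" "b \<in> H" for a b
    using that inv lam subgroup.m_inv_closed[OF mult] unfolding brace_cycle_op_def by simp
qed

lemma brace_gen_subgroups:
  assumes "x \<in> carrier R"
  shows "additive_subgroup (brace_gen R x) R" "subgroup (brace_gen R x) R" "x \<in> brace_gen R x"
proof -
  define fam where "fam = {S. x \<in> S \<and> additive_subgroup S R \<and> subgroup S R}"
  have gen: "brace_gen R x = \<Inter>fam" unfolding brace_gen_def fam_def ..
  have "carrier R \<in> fam"
    unfolding fam_def using assms subgroup_self add.subgroup_self
      by (auto intro: additive_subgroupI)
  then show "subgroup (brace_gen R x) R"
    unfolding gen by (intro subgroups_Inter) (auto simp: fam_def)
  from \<open>carrier R \<in> fam\<close> show "additive_subgroup (brace_gen R x) R"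
    unfolding gen
      by (intro additive_subgroupI add.subgroups_Inter) (auto simp: fam_def additive_subgroup_def)
  show "x \<in> brace_gen R x" unfolding gen fam_def by blast
qed

lemma brace_gen_restrict:
  assumes x: "x \<in> carrier R"
  defines "H \<equiv> brace_gen R x"
  shows "brace_gen (R\<lparr>carrier := H\<rparr>) x = H"
proof (rule equalityI)
  note H = brace_gen_subgroups[OF x, folded H_def]
  have "subgroup H (R\<lparr>carrier := H\<rparr>)"
    using group.subgroup_self[OF subgroup.subgroup_is_group[OF H(2) is_group]] by simp
  moreover have "additive_subgroup H (R\<lparr>carrier := H\<rparr>)"
    using group.subgroup_self[OF subgroup.subgroup_is_group[OF additive_subgroup.a_subgroup[OF H(1)]
        a_group]]
    by (intro additive_subgroupI) simp
  ultimately show "brace_gen (R\<lparr>carrier := H\<rparr>) x \<subseteq> H" using H(3) by (intro brace_gen_least)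
  show "H \<subseteq> brace_gen (R\<lparr>carrier := H\<rparr>) x"
    unfolding brace_gen_def
  proof (rule Inter_greatest)
    fix S
    assume "S \<in> {S. x \<in> S \<and> additive_subgroup S (R\<lparr>carrier := H\<rparr>) \<and>
      subgroup S (R\<lparr>carrier := H\<rparr>)}"
    then have S: "x \<in> S" "additive_subgroup S (R\<lparr>carrier := H\<rparr>)" "subgroup S (R\<lparr>carrier := H\<rparr>)"
      by auto
    have "subgroup S R" using incl_subgroup[OF H(2) S(3)] .
    moreover have "additive_subgroup S R"
      using add.incl_subgroup[OF additive_subgroup.a_subgroup[OF H(1)]] S(2)
      by (simp add: additive_subgroup_def)
    ultimately show "H \<subseteq> S" using brace_gen_least[OF S(1)] by (simp add: H_def)
  qed
qed

end

definition transport :: "('b \<Rightarrow> 'c) \<Rightarrow> ('b, 'm) ring_scheme \<Rightarrow> 'c ring" where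
  "transport g R = \<lparr>carrier = g ` carrier R,
     Group.monoid.mult = (\<lambda>a b. g (inv_into (carrier R) g a \<otimes>\<^bsub>R\<^esub> inv_into (carrier R) g b)),
     one = g \<one>\<^bsub>R\<^esub>, ring.zero = g \<zero>\<^bsub>R\<^esub>,
     ring.add = (\<lambda>a b. g (inv_into (carrier R) g a \<oplus>\<^bsub>R\<^esub> inv_into (carrier R) g b))\<rparr>"

lemma transport_carrier [simp]: "carrier (transport g R) = g ` carrier R"
  and transport_one [simp]: "\<one>\<^bsub>transport g R\<^esub> = g \<one>\<^bsub>R\<^esub>"
  and transport_zero [simp]: "\<zero>\<^bsub>transport g R\<^esub> = g \<zero>\<^bsub>R\<^esub>"
  by (simp_all add: transport_def)

lemma transport_mult [simp]:
  "inj_on g (carrier R) \<Longrightarrow> a \<in> carrier R \<Longrightarrow> b \<in> carrier R \<Longrightarrow>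
    g a \<otimes>\<^bsub>transport g R\<^esub> g b = g (a \<otimes>\<^bsub>R\<^esub> b)"
  and transport_add [simp]:
  "inj_on g (carrier R) \<Longrightarrow> a \<in> carrier R \<Longrightarrow> b \<in> carrier R \<Longrightarrow>
    g a \<oplus>\<^bsub>transport g R\<^esub> g b = g (a \<oplus>\<^bsub>R\<^esub> b)"
  by (simp_all add: transport_def)

lemma (in abelian_group) abelian_group_transport:
  assumes g: "inj_on g (carrier G)"
  shows "abelian_group (transport g G)"
proof (rule abelian_groupI, unfold transport_carrier)
  fix x y z assume "x \<in> g ` carrier G" "y \<in> g ` carrier G" "z \<in> g ` carrier G"
  then obtain a b c where abc: "a \<in> carrier G" "b \<in> carrier G" "c \<in> carrier G"
    "x = g a" "y = g b" "z = g c"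
    by blast
  show "x \<oplus>\<^bsub>transport g G\<^esub> y \<in> g ` carrier G" using abc g by simp
  show "x \<oplus>\<^bsub>transport g G\<^esub> y \<oplus>\<^bsub>transport g G\<^esub> z = x \<oplus>\<^bsub>transport g G\<^esub> (y \<oplus>\<^bsub>transport g G\<^esub> z)"
    using abc g by (simp add: a_assoc)
  show "x \<oplus>\<^bsub>transport g G\<^esub> y = y \<oplus>\<^bsub>transport g G\<^esub> x" using abc g by (simp add: a_comm)
  show "\<zero>\<^bsub>transport g G\<^esub> \<oplus>\<^bsub>transport g G\<^esub> x = x" using abc g by simp
  show "\<exists>y\<in>g ` carrier G. y \<oplus>\<^bsub>transport g G\<^esub> x = \<zero>\<^bsub>transport g G\<^esub>"
    using abc g by (intro bexI[of _ "g (\<ominus> a)"]) (simp_all add: l_neg)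
qed simp

lemma group_transport:
  fixes R :: "('b, 'm) ring_scheme" (structure)
  assumes "group R" and g: "inj_on g (carrier R)"
  shows "group (transport g R)"
proof (rule groupI, unfold transport_carrier)
  interpret group R by fact
  fix x y z assume "x \<in> g ` carrier R" "y \<in> g ` carrier R" "z \<in> g ` carrier R"
  then obtain a b c where abc: "a \<in> carrier R" "b \<in> carrier R" "c \<in> carrier R"
    "x = g a" "y = g b" "z = g c"
    by blast
  show "x \<otimes>\<^bsub>transport g R\<^esub> y \<in> g ` carrier R" using abc g by simp
  show "x \<otimes>\<^bsub>transport g R\<^esub> y \<otimes>\<^bsub>transport g R\<^esub> z = x \<otimes>\<^bsub>transport g R\<^esub> (y \<otimes>\<^bsub>transport g R\<^esub> z)"
    using abc g by (simp add: m_assoc)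
  show "\<one>\<^bsub>transport g R\<^esub> \<otimes>\<^bsub>transport g R\<^esub> x = x" using abc g by simp
  show "\<exists>y\<in>g ` carrier R. y \<otimes>\<^bsub>transport g R\<^esub> x = \<one>\<^bsub>transport g R\<^esub>"
    using abc g by (intro bexI[of _ "g (inv a)"]) simp_all
qed (simp add: group.is_monoid[OF \<open>group R\<close>])

lemma (in brace_locale) brace_transport:
  assumes g: "inj_on g (carrier R)"
  shows "brace (transport g R)"
    and "\<And>a b. a \<in> carrier R \<Longrightarrow> b \<in> carrier R \<Longrightarrow>
          brace_cycle_op (transport g R) (g a) (g b) = g (brace_cycle_op R a b)"
proof -
  note ag = abelian_group_transport[OF g] and gr = group_transport[OF is_group g]
  have minus: "\<ominus>\<^bsub>transport g R\<^esub> (g a) = g (\<ominus> a)" if "a \<in> carrier R" for a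
    using abelian_group.minus_equality[OF ag, of "g (\<ominus> a)" "g a"] that g by (simp add: l_neg)
  have inv: "inv\<^bsub>transport g R\<^esub> (g a) = g (inv a)" if "a \<in> carrier R" for a
    using group.inv_equality[OF gr, of "g (inv a)" "g a"] that g by simp
  show "brace (transport g R)"
    unfolding brace_def
  proof (intro conjI ag gr ballI)
    fix x y z
    assume "x \<in> carrier (transport g R)" "y \<in> carrier (transport g R)" "z \<in> carrier (transport g R)"
    then obtain a b c where "a \<in> carrier R" "b \<in> carrier R" "c \<in> carrier R"
      "x = g a" "y = g b" "z = g c"
      unfolding transport_carrier by blast
    then show "x \<otimes>\<^bsub>transport g R\<^esub> (y \<oplus>\<^bsub>transport g R\<^esub> z) =
        x \<otimes>\<^bsub>transport g R\<^esub> y \<oplus>\<^bsub>transport g R\<^esub> \<ominus>\<^bsub>transport g R\<^esub> x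
          \<oplus>\<^bsub>transport g R\<^esub> x \<otimes>\<^bsub>transport g R\<^esub> z"
      using g by (simp add: minus distr)
  qed
  show "brace_cycle_op (transport g R) (g a) (g b) = g (brace_cycle_op R a b)"
    if "a \<in> carrier R" "b \<in> carrier R" for a b
    using that g unfolding brace_cycle_op_def brace_lambda_def by (simp add: inv minus)
qed

section \<open>Cycle sets\<close>

lemma cycle_setD:
  assumes "cycle_set Cs opr"
  shows "Cs \<noteq> {}"
    and "\<And>x y. x \<in> Cs \<Longrightarrow> y \<in> Cs \<Longrightarrow> opr x y \<in> Cs"
    and "\<And>x. x \<in> Cs \<Longrightarrow> bij_betw (opr x) Cs Cs"
    and "\<And>x y z. x \<in> Cs \<Longrightarrow> y \<in> Cs \<Longrightarrow> z \<in> Cs \<Longrightarrow>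
           opr (opr x y) (opr x z) = opr (opr y x) (opr y z)"
  using assms unfolding cycle_set_def by auto

lemma cycle_set_closed_subset:
  assumes cs: "cycle_set Cs opr" and Y: "Y \<subseteq> Cs" "finite Y" "Y \<noteq> {}"
    and closed: "\<And>y z. y \<in> Y \<Longrightarrow> z \<in> Y \<Longrightarrow> opr y z \<in> Y"
  shows "cycle_set Y opr"
proof -
  have "bij_betw (opr y) Y Y" if y: "y \<in> Y" for y
  proof -
    have "inj_on (opr y) Y"
      using cycle_setD(3)[OF cs] y Y(1) inj_on_subset unfolding bij_betw_def by blast
    moreover then have "opr y ` Y = Y" using endo_inj_surj[OF Y(2)] closed y by blast
    ultimately show ?thesis unfolding bij_betw_def by blast
  qed
  moreover have "opr (opr x y) (opr x z) = opr (opr y x) (opr y z)"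
    if "x \<in> Y" "y \<in> Y" "z \<in> Y" for x y z
    using that Y(1) cycle_setD(4)[OF cs] by blast
  ultimately show ?thesis using Y(3) closed unfolding cycle_set_def by blast
qed

lemma gen_cycle_mem: "x \<in> gen_cycle Cs opr x"
  unfolding gen_cycle_def by blast

lemma gen_cycle_closed:
  assumes "y \<in> gen_cycle Cs opr x" "z \<in> gen_cycle Cs opr x"
  shows "opr y z \<in> gen_cycle Cs opr x"
  using assms unfolding gen_cycle_def sub_cycle_set_def by (auto dest: cycle_setD(2))

lemma gen_cycle_subset: "cycle_set Cs opr \<Longrightarrow> x \<in> Cs \<Longrightarrow> gen_cycle Cs opr x \<subseteq> Cs"
  unfolding gen_cycle_def sub_cycle_set_def by blast

lemma gen_cycle_least:
  assumes "cycle_set Cs opr" "finite Cs" and Z: "Z \<subseteq> Cs" "x \<in> Z"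
    and closed: "\<And>y z. y \<in> Z \<Longrightarrow> z \<in> Z \<Longrightarrow> opr y z \<in> Z"
  shows "gen_cycle Cs opr x \<subseteq> Z"
proof -
  have "cycle_set Z opr"
    using assms by (intro cycle_set_closed_subset[OF assms(1) Z(1)]) (auto intro: finite_subset)
  then show ?thesis using Z unfolding gen_cycle_def sub_cycle_set_def by blast
qed

lemma cycle_set_complement_invariant:
  assumes cs: "cycle_set Y opr" and fin: "finite Y" and Z: "Z \<subseteq> Y"
    and invariant: "\<And>z w. z \<in> Y \<Longrightarrow> w \<in> Z \<Longrightarrow> opr z w \<in> Z"
    and z: "z \<in> Y" and w: "w \<in> Y - Z"
  shows "opr z w \<in> Y - Z"
proof -
  have inj: "inj_on (opr z) Y" using cycle_setD(3)[OF cs z] unfolding bij_betw_def by blast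
  have "opr z ` Z = Z"
    using invariant[OF z]
    by (intro endo_inj_surj finite_subset[OF Z fin] inj_on_subset[OF inj Z]) auto
  then have "opr z w \<notin> Z" using w Z inj unfolding inj_on_def by blast
  then show ?thesis using cycle_setD(2)[OF cs z] w by blast
qed

lemma cycle_set_squares_invariant:
  assumes cs: "cycle_set Y opr" and z: "z \<in> Y" and w: "w \<in> (\<lambda>u. opr u u) ` Y"
  shows "opr z w \<in> (\<lambda>u. opr u u) ` Y"
proof -
  obtain u where u: "u \<in> Y" "w = opr u u" using w by blast
  have "z \<in> opr u ` Y" using cycle_setD(3)[OF cs u(1)] z unfolding bij_betw_def by simp
  then obtain y where y: "y \<in> Y" "z = opr u y" by blast
  have "opr z w = opr (opr y u) (opr y u)" using cycle_setD(4)[OF cs u(1) y(1) u(1)] u y by simp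
  then show ?thesis using cycle_setD(2)[OF cs y(1) u(1)] by blast
qed

text \<open>Rump's argument: the non-squares form an invariant subset, hence a smaller cycle set,
  whose squares would have to be non-squares.\<close>

lemma cycle_set_squares_surj:
  assumes "finite Y" "cycle_set Y opr"
  shows "(\<lambda>z. opr z z) ` Y = Y"
  using assms
proof (induction "card Y" arbitrary: Y rule: less_induct)
  case less
  note fin = less.prems(1) and cs = less.prems(2)
  define Z where "Z = (\<lambda>z. opr z z) ` Y"
  have ZY: "Z \<subseteq> Y" unfolding Z_def using cycle_setD(2)[OF cs] by blast
  show ?case
  proof (rule ccontr)
    assume "(\<lambda>z. opr z z) ` Y \<noteq> Y"
    then have ne: "Y - Z \<noteq> {}" using ZY unfolding Z_def by blast
    have closed: "opr z w \<in> Y - Z" if "z \<in> Y - Z" "w \<in> Y - Z" for z w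
      using cycle_set_complement_invariant[OF cs fin ZY] cycle_set_squares_invariant[OF cs] that
      unfolding Z_def by blast
    have "Z \<noteq> {}" using cycle_setD(1)[OF cs] unfolding Z_def by blast
    then have "card (Y - Z) < card Y" using fin ZY by (intro psubset_card_mono) auto
    moreover have "cycle_set (Y - Z) opr"
      using fin ne closed by (intro cycle_set_closed_subset[OF cs]) auto
    ultimately have "(\<lambda>z. opr z z) ` (Y - Z) = Y - Z" using less.hyps fin by blast
    moreover have "(\<lambda>z. opr z z) ` (Y - Z) \<subseteq> Z" unfolding Z_def by blast
    ultimately show False using ne by blast
  qed
qed

section \<open>Cycle sets generated by one element\<close>

text \<open>Condition (2) of the theorem, with X embedded into B by f.\<close>

definition generated_orbit_embedding ::
    "('b, 'm) ring_scheme \<Rightarrow> ('a \<Rightarrow> 'b) \<Rightarrow> 'a set \<Rightarrow> ('a \<Rightarrow> 'a \<Rightarrow> 'a) \<Rightarrow> 'a \<Rightarrow> bool" where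
  "generated_orbit_embedding R f Cs opr x \<longleftrightarrow>
     finite (carrier R) \<and> brace R \<and> inj_on f Cs \<and> f ` Cs \<subseteq> carrier R \<and>
     (\<forall>y\<in>Cs. \<forall>z\<in>Cs. f (opr y z) = brace_cycle_op R (f y) (f z)) \<and>
     f ` Cs = {brace_lambda R b (f x) | b. b \<in> carrier R} \<and>
     carrier R = brace_gen R (f x)"

lemma generated_orbit_embeddingD:
  assumes "generated_orbit_embedding R f Cs opr x"
  shows "finite (carrier R)" "brace R" "inj_on f Cs" "f ` Cs \<subseteq> carrier R"
    and "\<And>y z. y \<in> Cs \<Longrightarrow> z \<in> Cs \<Longrightarrow> f (opr y z) = brace_cycle_op R (f y) (f z)"
    and "f ` Cs = {brace_lambda R b (f x) | b. b \<in> carrier R}"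
    and "carrier R = brace_gen R (f x)"
  using assms unfolding generated_orbit_embedding_def by blast+

lemma gen_cycle_if_generated_orbit_embedding:
  assumes cs: "cycle_set Cs opr" and x: "x \<in> Cs"
    and emb: "generated_orbit_embedding R f Cs opr x"
  shows "Cs = gen_cycle Cs opr x"
proof
  note emb = generated_orbit_embeddingD[OF emb]
  interpret brace_locale R using emb(2) by (simp add: brace_iff_brace_locale)
  define G where "G = gen_cycle Cs opr x"
  have G: "G \<subseteq> Cs" unfolding G_def by (rule gen_cycle_subset[OF cs x])
  then show "gen_cycle Cs opr x \<subseteq> Cs" unfolding G_def .
  have fG: "f ` G \<subseteq> carrier R" using emb(4) G by blast
  have closed: "brace_cycle_op R u v \<in> f ` G" if uv: "u \<in> f ` G" "v \<in> f ` G" for u v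
  proof -
    obtain y z where yz: "y \<in> G" "z \<in> G" and "u = f y" "v = f z" using uv by blast
    moreover have "y \<in> Cs" "z \<in> Cs" using yz G by blast+
    ultimately have "brace_cycle_op R u v = f (opr y z)" using emb(5) by simp
    then show ?thesis using yz unfolding G_def by (blast intro: gen_cycle_closed)
  qed
  show "Cs \<subseteq> gen_cycle Cs opr x"
  proof
    fix y assume y: "y \<in> Cs"
    then obtain b where b: "b \<in> brace_gen R (f x)" "f y = lam b (f x)" using emb(6,7) by blast
    have "f x \<in> f ` G" unfolding G_def by (rule imageI[OF gen_cycle_mem])
    then have "f y \<in> f ` G" using lam_brace_gen_closed[OF emb(1) fG closed _ b(1)] b(2) by simp
    then show "y \<in> gen_cycle Cs opr x"
      using y G emb(3) unfolding G_def by (auto dest: inj_onD)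
  qed
qed

lemma (in brace_locale) sub_brace_cycle_op_closed:
  assumes "additive_subgroup H R" "subgroup H R" "a \<in> H" "b \<in> H"
  shows "brace_cycle_op R a b \<in> H"
  using assms unfolding brace_cycle_op_def brace_lambda_def
  by (meson additive_subgroup.a_closed additive_subgroup.a_inv_closed subgroup.m_closed
      subgroup.m_inv_closed)

lemma (in brace_locale) generated_image_subset_orbit:
  assumes cs: "cycle_set Cs opr" "finite Cs" and x: "x \<in> Cs" and gen: "Cs = gen_cycle Cs opr x"
    and f: "f ` Cs \<subseteq> carrier R"
    and hom: "\<forall>y\<in>Cs. \<forall>z\<in>Cs. f (opr y z) = brace_cycle_op R (f y) (f z)"
  shows "f ` Cs \<subseteq> brace_gen R (f x)" and "f ` Cs \<subseteq> {lam b (f x) | b. b \<in> brace_gen R (f x)}"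
proof -
  define H where "H = brace_gen R (f x)"
  have fx: "f x \<in> carrier R" using f x by blast
  note H = brace_gen_subgroups[OF fx, folded H_def]
  have generated: "Cs \<subseteq> Z" if "Z \<subseteq> Cs" "x \<in> Z" "\<And>y z. y \<in> Z \<Longrightarrow> z \<in> Z \<Longrightarrow> opr y z \<in> Z" for Z
    using gen_cycle_least[OF cs that] gen by simp
  have "Cs \<subseteq> {y \<in> Cs. f y \<in> H}"
    using H x hom cycle_setD(2)[OF cs(1)] sub_brace_cycle_op_closed[OF H(1,2)]
    by (intro generated) auto
  then show fH: "f ` Cs \<subseteq> H" unfolding H_def by blast
  define Orb where "Orb = {y \<in> Cs. \<exists>b\<in>H. f y = lam b (f x)}"
  have "Cs \<subseteq> Orb"
  proof (rule generated)
    show "x \<in> Orb" unfolding Orb_def using x lam_one[OF fx] subgroup.one_closed[OF H(2)] by force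
    fix y z assume "y \<in> Orb" "z \<in> Orb"
    then obtain b where y: "y \<in> Cs" and z: "z \<in> Cs" and b: "b \<in> H" "f z = lam b (f x)"
      unfolding Orb_def by blast
    have "inv (f y) \<in> H" using fH y subgroup.m_inv_closed[OF H(2)] unfolding H_def by blast
    moreover have "f (opr y z) = lam (inv (f y) \<otimes> b) (f x)"
      using hom y z b lam_mult[of "inv (f y)" b "f x"] calculation subgroup.subset[OF H(2)] fx
      by (auto simp: brace_cycle_op_def subset_iff)
    ultimately show "opr y z \<in> Orb"
      unfolding Orb_def using cycle_setD(2)[OF cs(1) y z] subgroup.m_closed[OF H(2) _ b(1)] by blast
  qed (simp add: Orb_def)
  then show "f ` Cs \<subseteq> {lam b (f x) | b. b \<in> H}" unfolding Orb_def by blast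
qed

lemma (in brace_locale) generated_orbit_embedding_restrict:
  assumes fin: "finite (carrier R)" and cs: "cycle_set Cs opr" "finite Cs" and x: "x \<in> Cs"
    and gen: "Cs = gen_cycle Cs opr x"
    and inj: "inj_on f Cs" and f: "f ` Cs \<subseteq> carrier R"
    and hom: "\<forall>y\<in>Cs. \<forall>z\<in>Cs. f (opr y z) = brace_cycle_op R (f y) (f z)"
  shows "generated_orbit_embedding (R\<lparr>carrier := brace_gen R (f x)\<rparr>) f Cs opr x"
proof -
  define H where "H = brace_gen R (f x)"
  have fx: "f x \<in> carrier R" using f x by blast
  note H = brace_gen_subgroups[OF fx, folded H_def]
  note sub = sub_brace[OF H(1,2)]
  note image = generated_image_subset_orbit[OF cs x gen f hom, folded H_def]
  have "lam b (f x) \<in> f ` Cs" if "b \<in> H" for b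
  proof (rule lam_brace_gen_closed[OF fin f _ _ that[unfolded H_def]])
    show "brace_cycle_op R u v \<in> f ` Cs" if "u \<in> f ` Cs" "v \<in> f ` Cs" for u v
      using that hom cycle_setD(2)[OF cs(1)] by (auto intro!: image_eqI[OF sym])
  qed (use x in blast)
  then have "f ` Cs = {lam b (f x) | b. b \<in> H}" using image(2) by blast
  also have "\<dots> = {brace_lambda (R\<lparr>carrier := H\<rparr>) b (f x) | b. b \<in> H}"
    using sub(2)[OF _ H(3)] by force
  finally have "f ` Cs = {brace_lambda (R\<lparr>carrier := H\<rparr>) b (f x) | b. b \<in> H}" .
  moreover have "\<forall>y\<in>Cs. \<forall>z\<in>Cs. f (opr y z) = brace_cycle_op (R\<lparr>carrier := H\<rparr>) (f y) (f z)"
    using hom image(1) sub(3) by (simp add: image_subset_iff)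
  ultimately show ?thesis
    unfolding generated_orbit_embedding_def H_def[symmetric]
    using finite_subset[OF subgroup.subset[OF H(2)] fin] sub(1) inj image(1)
      brace_gen_restrict[OF fx, folded H_def]
    by simp
qed

section \<open>A finite brace containing a finite cycle set\<close>

text \<open>Plain inv would be read as the group inverse of the HOL-Algebra structure syntax.\<close>

abbreviation inv_perm :: "('a \<Rightarrow> 'a) \<Rightarrow> 'a \<Rightarrow> 'a" where "inv_perm \<equiv> Hilbert_Choice.inv"

lemma permutes_inv_compose:
  "p permutes S \<Longrightarrow> q permutes S \<Longrightarrow> inv_perm (p \<circ> q) = inv_perm q \<circ> inv_perm p"
  by (simp add: o_inv_distrib permutes_bij)

lemma count_image_mset_permutes: "p permutes S \<Longrightarrow> count (image_mset p M) z = count M (inv_perm p z)"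
proof -
  assume p: "p permutes S"
  have "p -` {z} = {inv_perm p z}" using permutes_inverses[OF p] by auto
  then show ?thesis unfolding count_image_mset
    by (cases "inv_perm p z \<in># M") (auto simp: count_eq_zero_iff)
qed

lemma set_mset_image_mset_permutes: "p permutes S \<Longrightarrow> set_mset M \<subseteq> S \<Longrightarrow> set_mset (image_mset p M) \<subseteq> S"
  by (auto simp: permutes_in_image)

lemma permutes_common_period:
  assumes "finite S"
  shows "\<exists>N>0. \<forall>p. p permutes S \<longrightarrow> p ^^ N = id"
proof -
  have "\<exists>k>0. p ^^ k = id" if "p permutes S" for p
    using permutation_is_nilpotent[of p] that assms permutation_permutes by blast
  then obtain ord where ord: "\<And>p. p permutes S \<Longrightarrow> 0 < ord p \<and> p ^^ ord p = id" by metis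
  define N where "N = (\<Prod>p \<in> {p. p permutes S}. ord p)"
  have fin: "finite {p. p permutes S}" using finite_permutations[OF assms] .
  have "0 < N" unfolding N_def using ord by (intro prod_pos) auto
  moreover have "p ^^ N = id" if p: "p permutes S" for p
  proof -
    have "ord p dvd N" unfolding N_def using fin p by (intro dvd_prod_eqI) auto
    then obtain m where "N = ord p * m" by (rule dvdE)
    then show ?thesis using ord[OF p] by (simp add: funpow_mult[symmetric])
  qed
  ultimately show ?thesis by blast
qed

locale finite_cycle_set =
  fixes Cs :: "'a set" and opr :: "'a \<Rightarrow> 'a \<Rightarrow> 'a"
  assumes cycle_set: "cycle_set Cs opr" and finite: "finite Cs"
begin

definition sigma :: "'a \<Rightarrow> 'a \<Rightarrow> 'a" where "sigma y z = (if z \<in> Cs then opr y z else z)"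

lemma sigma_permutes: "y \<in> Cs \<Longrightarrow> sigma y permutes Cs"
proof (rule bij_imp_permutes)
  assume y: "y \<in> Cs"
  show "bij_betw (sigma y) Cs Cs"
    using cycle_setD(3)[OF cycle_set y]
    by (rule bij_betw_cong[THEN iffD1, rotated]) (simp add: sigma_def)
qed (simp add: sigma_def)

lemma inv_sigma_cycle:
  assumes u: "u \<in> Cs" and w: "w \<in> Cs"
  shows "inv_perm (sigma u) \<circ> inv_perm (sigma (sigma u w)) =
    inv_perm (sigma w) \<circ> inv_perm (sigma (sigma w u))"
proof -
  have uw: "opr u w \<in> Cs" "opr w u \<in> Cs" using cycle_setD(2)[OF cycle_set] u w by auto
  have "sigma (opr u w) \<circ> sigma u = sigma (opr w u) \<circ> sigma w"
    using cycle_setD(2,4)[OF cycle_set] u w by (auto simp: sigma_def)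
  then show ?thesis
    using u w uw permutes_inv_compose[OF sigma_permutes sigma_permutes]
    by (metis sigma_def)
qed

text \<open>Lam M is \<lambda>_M in the structure brace. As M + {#y#} = M \<circ> {#u#} with u = (Lam M)^-1(y),
  and \<lambda>_u = (sigma u)^-1 for a generator u, adding y composes Lam M with (sigma u)^-1; by the
  cycle set identity, in the form of inv_sigma_cycle, these steps commute.\<close>

definition lam_step :: "'a \<Rightarrow> ('a \<Rightarrow> 'a) \<Rightarrow> 'a \<Rightarrow> 'a" where
  "lam_step y p = (if y \<in> Cs \<and> p permutes Cs then p \<circ> inv_perm (sigma (inv_perm p y)) else p)"

lemma lam_step_permutes:
  assumes p: "p permutes Cs"
  shows "lam_step y p permutes Cs"
proof (cases "y \<in> Cs")
  case True
  then have "inv_perm p y \<in> Cs" using permutes_inv[OF p] by (simp add: permutes_in_image)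
  then show ?thesis
    using p permutes_compose[OF permutes_inv[OF sigma_permutes] p] by (simp add: lam_step_def)
qed (simp add: lam_step_def p)

lemma lam_step_commute: "lam_step y (lam_step z p) = lam_step z (lam_step y p)"
proof (cases "y \<in> Cs \<and> z \<in> Cs \<and> p permutes Cs")
  case True
  then have y: "y \<in> Cs" and z: "z \<in> Cs" and p: "p permutes Cs" by auto
  define a b where "a = inv_perm p z" and "b = inv_perm p y"
  have a: "a \<in> Cs" and b: "b \<in> Cs"
    unfolding a_def b_def using permutes_inv[OF p] y z by (simp_all add: permutes_in_image)
  have "inv_perm (p \<circ> inv_perm (sigma a)) y = sigma a b"
    using permutes_inv_compose[OF p permutes_inv[OF sigma_permutes[OF a]]]
      permutes_inv_inv[OF sigma_permutes[OF a]] by (simp add: b_def)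
  moreover have "inv_perm (p \<circ> inv_perm (sigma b)) z = sigma b a"
    using permutes_inv_compose[OF p permutes_inv[OF sigma_permutes[OF b]]]
      permutes_inv_inv[OF sigma_permutes[OF b]] by (simp add: a_def)
  moreover have "p \<circ> inv_perm (sigma a) permutes Cs" "p \<circ> inv_perm (sigma b) permutes Cs"
    using a b p by (auto intro: permutes_compose permutes_inv sigma_permutes)
  ultimately show ?thesis
    using y z p inv_sigma_cycle[OF a b]
    by (simp add: lam_step_def a_def[symmetric] b_def[symmetric] comp_assoc)
next
  case False
  then show ?thesis
    by (cases "p permutes Cs") (auto simp: lam_step_def lam_step_permutes[unfolded lam_step_def])
qed

sublocale lam_step: comp_fun_commute lam_step
  by unfold_locales (simp add: fun_eq_iff lam_step_commute)

definition Lam :: "'a multiset \<Rightarrow> 'a \<Rightarrow> 'a" where "Lam M = fold_mset lam_step id M"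

lemma Lam_empty [simp]: "Lam {#} = id"
  by (simp add: Lam_def)

lemma Lam_add_mset: "Lam (add_mset y M) = lam_step y (Lam M)"
  by (simp add: Lam_def)

lemma Lam_permutes: "Lam M permutes Cs"
proof (induction M)
  case empty
  show ?case unfolding Lam_empty by (rule permutes_id)
qed (simp add: Lam_add_mset lam_step_permutes)

lemma Lam_singleton: "y \<in> Cs \<Longrightarrow> Lam {#y#} = inv_perm (sigma y)"
  by (simp add: Lam_add_mset lam_step_def permutes_id)

lemma Lam_union: "Lam (M + N) = Lam M \<circ> Lam (image_mset (inv_perm (Lam M)) N)"
proof (induction N)
  case (add y N)
  define p r where "p = Lam M" and "r = Lam (image_mset (inv_perm p) N)"
  have p: "p permutes Cs" and r: "r permutes Cs" unfolding p_def r_def by (rule Lam_permutes)+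
  have "Lam (M + add_mset y N) = lam_step y (p \<circ> r)"
    unfolding p_def r_def add.IH[symmetric] by (simp add: Lam_add_mset)
  also have "\<dots> = p \<circ> lam_step (inv_perm p y) r"
    using p r permutes_compose[OF r p] permutes_inv_compose[OF p r]
      permutes_in_image[OF permutes_inv[OF p], of y]
    by (auto simp: lam_step_def o_assoc)
  also have "\<dots> = Lam M \<circ> Lam (image_mset (inv_perm (Lam M)) (add_mset y N))"
    by (simp add: Lam_add_mset p_def r_def)
  finally show ?case .
qed simp

lemma Lam_union_image: "Lam (M + image_mset (Lam M) N) = Lam M \<circ> Lam N"
  using permutes_inv_o(2)[OF Lam_permutes] by (simp add: Lam_union image_mset.compositionality)

definition square :: "'a \<Rightarrow> 'a" where "square z = (if z \<in> Cs then opr z z else z)"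

lemma square_permutes: "square permutes Cs"
proof (rule bij_imp_permutes)
  have im: "(\<lambda>z. opr z z) ` Cs = Cs" by (rule cycle_set_squares_surj[OF finite cycle_set])
  then have "bij_betw (\<lambda>z. opr z z) Cs Cs"
    unfolding bij_betw_def using eq_card_imp_inj_on[OF finite, of "\<lambda>z. opr z z"] im by simp
  then show "bij_betw square Cs Cs"
    by (rule bij_betw_cong[THEN iffD1, rotated]) (simp add: square_def)
qed (simp add: square_def)

lemma inv_Lam_replicate: "y \<in> Cs \<Longrightarrow> inv_perm (Lam (replicate_mset k y)) y = (square ^^ k) y"
proof (induction k)
  case (Suc k)
  define p u where "p = Lam (replicate_mset k y)" and "u = inv_perm p y"
  have p: "p permutes Cs" unfolding p_def by (rule Lam_permutes)
  have u: "u = (square ^^ k) y" using Suc unfolding p_def u_def by simp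
  have uC: "u \<in> Cs" unfolding u using permutes_funpow[OF square_permutes] Suc.prems
    by (simp add: permutes_in_image)
  have "Lam (replicate_mset (Suc k) y) = p \<circ> inv_perm (sigma u)"
    using Suc.prems p by (simp add: Lam_add_mset lam_step_def p_def u_def)
  then have "inv_perm (Lam (replicate_mset (Suc k) y)) y = sigma u u"
    using permutes_inv_compose[OF p permutes_inv[OF sigma_permutes[OF uC]]]
      permutes_inv_inv[OF sigma_permutes[OF uC]] by (simp add: p_def u_def)
  moreover have "sigma u u = square u" using uC by (simp add: sigma_def square_def)
  ultimately show ?case using u by simp
qed simp

lemma Lam_replicate_outside: "y \<notin> Cs \<Longrightarrow> Lam (replicate_mset k y) = id"
  by (induction k) (simp_all add: Lam_add_mset lam_step_def)

definition period :: nat where "period = (SOME N. 0 < N \<and> (\<forall>p. p permutes Cs \<longrightarrow> p ^^ N = id))"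

lemma period_pos: "0 < period" and funpow_period: "p permutes Cs \<Longrightarrow> p ^^ period = id"
  using someI_ex[OF permutes_common_period[OF finite]] unfolding period_def by blast+

lemma replicate_mset_add: "replicate_mset (m + n) y = replicate_mset m y + replicate_mset n y"
  by (simp add: multiset_eq_iff)

lemma Lam_replicate_period_mult:
  assumes y: "y \<in> Cs"
  shows "Lam (replicate_mset (period * k) y) = Lam (replicate_mset period y) ^^ k"
proof (induction k)
  case (Suc k)
  have "inv_perm (Lam (replicate_mset (period * k) y)) y = y"
    using inv_Lam_replicate[OF y] funpow_period[OF square_permutes]
    by (simp add: funpow_mult[symmetric])
  then have "Lam (replicate_mset (period * Suc k) y) =
      Lam (replicate_mset (period * k) y) \<circ> Lam (replicate_mset period y)"
    using Lam_union[of "replicate_mset (period * k) y" "replicate_mset period y"]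
      replicate_mset_add[of "period * k" period y] by (simp add: add.commute)
  then show ?case unfolding Suc.IH funpow_Suc_right .
qed simp

text \<open>Any multiple of period * period kills all generators (Lam_replicate_period_mult); the
  factor 2 only ensures that the generators {#y#} are reduced.\<close>

definition modulus :: nat where "modulus = 2 * period * period"

lemma modulus_gt_1: "1 < modulus"
proof -
  have "0 < period * period" using period_pos by simp
  then show ?thesis unfolding modulus_def by linarith
qed

lemma Lam_add_replicate_modulus: "Lam (M + replicate_mset modulus y) = Lam M"
proof -
  have "Lam (replicate_mset modulus y) = id" for y
  proof (cases "y \<in> Cs")
    case True
    have "Lam (replicate_mset modulus y) = Lam (replicate_mset period y) ^^ (period * 2)"
      unfolding modulus_def using Lam_replicate_period_mult[OF True, of "period * 2"]
      by (simp add: ac_simps)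
    also have "\<dots> = (Lam (replicate_mset period y) ^^ period) ^^ 2" by (simp add: funpow_mult)
    finally show ?thesis using funpow_period[OF Lam_permutes] by simp
  qed (rule Lam_replicate_outside)
  then show ?thesis using Lam_union[of M "replicate_mset modulus y"] by simp
qed

definition reduce :: "'a multiset \<Rightarrow> 'a multiset" where
  "reduce M = Abs_multiset (\<lambda>y. count M y mod modulus)"

lemma count_reduce [simp]: "count (reduce M) y = count M y mod modulus"
proof -
  have "{y. 0 < count M y mod modulus} \<subseteq> set_mset M"
    using gr_zeroI by (fastforce simp flip: count_greater_zero_iff)
  then show ?thesis unfolding reduce_def by (simp add: count_Abs_multiset finite_subset)
qed

lemma set_mset_reduce: "set_mset (reduce M) \<subseteq> set_mset M"
  using gr_zeroI by (fastforce simp flip: count_greater_zero_iff)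

lemma reduce_eq_self: "(\<And>y. count M y < modulus) \<Longrightarrow> reduce M = M"
  by (simp add: multiset_eq_iff)

lemma Lam_reduce: "Lam (reduce M) = Lam M"
proof (induction "size M" arbitrary: M rule: less_induct)
  case less
  show ?case
  proof (cases "\<forall>y. count M y < modulus")
    case False
    then obtain y where y: "modulus \<le> count M y" by (auto simp: not_less)
    define M' where "M' = M - replicate_mset modulus y"
    have M: "M = M' + replicate_mset modulus y"
      unfolding M'_def using y by (simp add: multiset_eq_iff)
    then have "reduce M = reduce M'" by (simp add: multiset_eq_iff)
    moreover have "size M' < size M" using M modulus_gt_1 by simp
    ultimately have "Lam (reduce M) = Lam M'" using less.hyps by simp
    then show ?thesis using Lam_add_replicate_modulus[of M' y] M by simp
  qed (simp add: reduce_eq_self)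
qed

definition reduced :: "'a multiset set" where
  "reduced = {M. set_mset M \<subseteq> Cs \<and> (\<forall>y. count M y < modulus)}"

lemma reducedD: "M \<in> reduced \<Longrightarrow> set_mset M \<subseteq> Cs" "M \<in> reduced \<Longrightarrow> count M y < modulus"
  unfolding reduced_def by auto

lemma reduce_in_reduced: "set_mset M \<subseteq> Cs \<Longrightarrow> reduce M \<in> reduced"
  unfolding reduced_def using set_mset_reduce modulus_gt_1 by auto

lemma reduce_reduced: "M \<in> reduced \<Longrightarrow> reduce M = M"
  by (simp add: reduce_eq_self reducedD)

definition add_red :: "'a multiset \<Rightarrow> 'a multiset \<Rightarrow> 'a multiset" where
  "add_red M N = reduce (M + N)"

definition mult_red :: "'a multiset \<Rightarrow> 'a multiset \<Rightarrow> 'a multiset" where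
  "mult_red M N = reduce (M + image_mset (Lam M) N)"

definition neg_red :: "'a multiset \<Rightarrow> 'a multiset" where
  "neg_red M = reduce (repeat_mset (modulus - 1) M)"

definition inv_red :: "'a multiset \<Rightarrow> 'a multiset" where
  "inv_red M = reduce (image_mset (inv_perm (Lam M)) (neg_red M))"

lemma count_neg_red: "count (neg_red M) y = (modulus - 1) * count M y mod modulus"
  by (simp add: neg_red_def)

lemma count_add_neg_red: "(count M z + count (neg_red M) z) mod modulus = 0"
proof -
  have "count M z + (modulus - 1) * count M z = modulus * count M z"
    using modulus_gt_1 by (cases modulus) auto
  then show ?thesis by (simp add: count_neg_red mod_add_right_eq)
qed

lemma Lam_mult_red: "Lam (mult_red M N) = Lam M \<circ> Lam N"
  unfolding mult_red_def Lam_reduce by (rule Lam_union_image)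

lemma count_mult_red:
  "count (mult_red M N) z = (count M z + count N (inv_perm (Lam M) z)) mod modulus"
  by (simp add: mult_red_def count_image_mset_permutes[OF Lam_permutes])

lemma mult_red_assoc: "mult_red (mult_red M N) P = mult_red M (mult_red N P)"
proof (rule multiset_eqI)
  fix z
  have "inv_perm (Lam M \<circ> Lam N) = inv_perm (Lam N) \<circ> inv_perm (Lam M)"
    by (rule permutes_inv_compose[OF Lam_permutes Lam_permutes])
  then show "count (mult_red (mult_red M N) P) z = count (mult_red M (mult_red N P)) z"
    by (simp add: count_mult_red Lam_mult_red mod_add_left_eq mod_add_right_eq add.assoc)
qed

lemma mult_red_inv_red: "mult_red M (inv_red M) = {#}"
proof (rule multiset_eqI)
  fix z
  have "count (image_mset (inv_perm (Lam M)) (neg_red M)) (inv_perm (Lam M) z) =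
      count (neg_red M) z"
    using count_image_mset_permutes[OF permutes_inv[OF Lam_permutes]]
      permutes_inv_inv[OF Lam_permutes]
      permutes_inverses(1)[OF Lam_permutes] by simp
  then show "count (mult_red M (inv_red M)) z = count {#} z"
    by (simp add: count_mult_red inv_red_def count_add_neg_red mod_add_right_eq)
qed

lemma set_mset_neg_red: "set_mset (neg_red M) \<subseteq> set_mset M"
  unfolding neg_red_def using set_mset_reduce by (fastforce simp flip: count_greater_zero_iff)

lemma inv_red_in_reduced: "M \<in> reduced \<Longrightarrow> inv_red M \<in> reduced"
  unfolding inv_red_def using reducedD(1) set_mset_neg_red
  by (intro reduce_in_reduced set_mset_image_mset_permutes[OF permutes_inv[OF Lam_permutes]]) blast

lemma inv_red_mult_red:
  assumes M: "M \<in> reduced"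
  shows "mult_red (inv_red M) M = {#}"
proof -
  have one: "mult_red {#} N = N" "mult_red N {#} = N" if "N \<in> reduced" for N
    using that by (simp_all add: mult_red_def reduce_reduced)
  define Y Z where "Y = inv_red M" and "Z = inv_red Y"
  have Y: "Y \<in> reduced" and Z: "Z \<in> reduced" unfolding Y_def Z_def using inv_red_in_reduced M
    by blast+
  have "M = mult_red M (mult_red Y Z)" unfolding Z_def using mult_red_inv_red one M by simp
  also have "\<dots> = Z" unfolding mult_red_assoc[symmetric] Y_def using mult_red_inv_red one Z by simp
  finally have "mult_red Y M = {#}" using mult_red_inv_red[of Y] unfolding Z_def by simp
  then show ?thesis unfolding Y_def .
qed

lemma count_add_red: "count (add_red M N) z = (count M z + count N z) mod modulus"
  by (simp add: add_red_def)

lemma add_red_in_reduced: "M \<in> reduced \<Longrightarrow> N \<in> reduced \<Longrightarrow> add_red M N \<in> reduced"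
  unfolding add_red_def using reducedD(1) by (intro reduce_in_reduced) auto

lemma mult_red_in_reduced: "M \<in> reduced \<Longrightarrow> N \<in> reduced \<Longrightarrow> mult_red M N \<in> reduced"
  unfolding mult_red_def using reducedD(1) set_mset_image_mset_permutes[OF Lam_permutes]
  by (intro reduce_in_reduced) (metis le_sup_iff set_mset_union)

lemma neg_red_in_reduced: "M \<in> reduced \<Longrightarrow> neg_red M \<in> reduced"
  using set_mset_neg_red[of M] reducedD(1)[of M] modulus_gt_1
  unfolding reduced_def by (auto simp: count_neg_red)

lemma add_red_neg_red: "add_red (neg_red M) M = {#}"
  using count_add_neg_red by (intro multiset_eqI) (simp add: count_add_red add.commute)

definition quotient_brace :: "'a multiset ring" where
  "quotient_brace =
     \<lparr>carrier = reduced, Group.monoid.mult = mult_red, one = {#},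
      ring.zero = {#}, ring.add = add_red\<rparr>"

lemma quotient_brace_simps [simp]:
  "carrier quotient_brace = reduced" "Group.monoid.mult quotient_brace = mult_red"
  "one quotient_brace = {#}" "ring.zero quotient_brace = {#}" "ring.add quotient_brace = add_red"
  by (simp_all add: quotient_brace_def)

lemma empty_in_reduced: "{#} \<in> reduced"
  unfolding reduced_def using modulus_gt_1 by auto

lemma abelian_group_quotient_brace: "abelian_group quotient_brace"
proof (rule abelian_groupI, simp_all add: add_red_in_reduced empty_in_reduced)
  fix M N P
  show "add_red (add_red M N) P = add_red M (add_red N P)"
    by (rule multiset_eqI) (simp add: count_add_red mod_add_left_eq mod_add_right_eq add.assoc)
  show "add_red M N = add_red N M" unfolding add_red_def by (simp add: add.commute)
  assume M: "M \<in> reduced"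
  then show "add_red {#} M = M" by (simp add: add_red_def reduce_reduced)
  show "\<exists>N\<in>reduced. add_red N M = {#}" using neg_red_in_reduced[OF M] add_red_neg_red by blast
qed

lemma group_quotient_brace: "group quotient_brace"
proof (rule groupI, simp_all add: mult_red_in_reduced empty_in_reduced mult_red_assoc)
  fix M assume M: "M \<in> reduced"
  then show "mult_red {#} M = M" by (simp add: mult_red_def reduce_reduced)
  show "\<exists>N\<in>reduced. mult_red N M = {#}" using inv_red_in_reduced[OF M] inv_red_mult_red[OF M]
    by blast
qed

lemma a_inv_quotient_brace: "M \<in> reduced \<Longrightarrow> \<ominus>\<^bsub>quotient_brace\<^esub> M = neg_red M"
  using abelian_group.minus_equality[OF abelian_group_quotient_brace, of "neg_red M" M]
    neg_red_in_reduced add_red_neg_red by simp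

lemma brace_quotient_brace: "brace quotient_brace"
  unfolding brace_def
proof (intro conjI ballI abelian_group_quotient_brace group_quotient_brace)
  fix M N P
  assume "M \<in> carrier quotient_brace" "N \<in> carrier quotient_brace" "P \<in> carrier quotient_brace"
  then have M: "M \<in> reduced" by simp
  show "M \<otimes>\<^bsub>quotient_brace\<^esub> (N \<oplus>\<^bsub>quotient_brace\<^esub> P) =
      M \<otimes>\<^bsub>quotient_brace\<^esub> N \<oplus>\<^bsub>quotient_brace\<^esub> \<ominus>\<^bsub>quotient_brace\<^esub> M
        \<oplus>\<^bsub>quotient_brace\<^esub> M \<otimes>\<^bsub>quotient_brace\<^esub> P"
  proof (simp add: a_inv_quotient_brace[OF M], rule multiset_eqI)
    fix z
    define m n b c where "m = count M z" and "n = count (neg_red M) z"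
      and "b = count N (inv_perm (Lam M) z)" and "c = count P (inv_perm (Lam M) z)"
    have "(m + n) mod modulus = 0" unfolding m_def n_def by (rule count_add_neg_red)
    moreover have "(((m + b) mod modulus + n) mod modulus + (m + c) mod modulus) mod modulus
        = (m + n + (m + (b + c))) mod modulus"
      by (simp only: mod_add_left_eq mod_add_right_eq) (simp add: ac_simps)
    ultimately have "(((m + b) mod modulus + n) mod modulus + (m + c) mod modulus) mod modulus
        = (m + (b + c) mod modulus) mod modulus"
      using mod_add_left_eq[of "m + n" modulus "m + (b + c)"] by (simp add: mod_add_right_eq)
    then show "count (mult_red M (add_red N P)) z =
        count (add_red (add_red (mult_red M N) (neg_red M)) (mult_red M P)) z"
      by (simp add: count_mult_red count_add_red m_def n_def b_def c_def)
  qed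
qed

lemma quotient_brace_lambda:
  assumes M: "M \<in> reduced" and N: "N \<in> reduced"
  shows "brace_lambda quotient_brace M N = image_mset (Lam M) N"
proof (rule multiset_eqI)
  fix z
  define m n k where "m = count M z" and "n = count (neg_red M) z"
    and "k = count N (inv_perm (Lam M) z)"
  have "(m + n) mod modulus = 0" unfolding m_def n_def by (rule count_add_neg_red)
  moreover have "k < modulus" unfolding k_def using reducedD(2)[OF N] .
  moreover have "(n + (m + k) mod modulus) mod modulus = (m + n + k) mod modulus"
    by (simp only: mod_add_right_eq) (simp add: ac_simps)
  ultimately have "(n + (m + k) mod modulus) mod modulus = k"
    using mod_add_left_eq[of "m + n" modulus k] by simp
  then show "count (brace_lambda quotient_brace M N) z = count (image_mset (Lam M) N) z"
    using M unfolding brace_lambda_def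
    by (simp add: a_inv_quotient_brace count_add_red count_mult_red
        count_image_mset_permutes[OF Lam_permutes]
        m_def n_def k_def)
qed

lemma singleton_in_reduced: "y \<in> Cs \<Longrightarrow> {#y#} \<in> reduced"
  unfolding reduced_def using modulus_gt_1 by auto

lemma quotient_brace_cycle_op_singleton:
  assumes y: "y \<in> Cs" and z: "z \<in> Cs"
  shows "brace_cycle_op quotient_brace {#y#} {#z#} = {#opr y z#}"
proof -
  note Q = group_quotient_brace and y' = singleton_in_reduced[OF y]
  define Y where "Y = inv\<^bsub>quotient_brace\<^esub> {#y#}"
  have Y: "Y \<in> reduced" unfolding Y_def using group.inv_closed[OF Q] y' by simp
  have "mult_red Y {#y#} = {#}" unfolding Y_def using group.l_inv[OF Q] y' by simp
  then have "Lam Y \<circ> inv_perm (sigma y) = id" using Lam_mult_red[of Y "{#y#}"] Lam_singleton[OF y]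
    by simp
  moreover have "Lam Y = (Lam Y \<circ> inv_perm (sigma y)) \<circ> sigma y"
    using permutes_inv_o(2)[OF sigma_permutes[OF y]] by (simp add: comp_assoc)
  ultimately have "Lam Y = sigma y" by simp
  then show ?thesis
    unfolding brace_cycle_op_def Y_def[symmetric]
      quotient_brace_lambda[OF Y singleton_in_reduced[OF z]]
    using z by (simp add: sigma_def)
qed

lemma finite_reduced: "finite reduced"
proof -
  have "reduced \<subseteq> (\<Union>n \<le> card Cs * modulus. multisets_of_size Cs n)"
  proof
    fix M assume M: "M \<in> reduced"
    have "size M = sum (count M) (set_mset M)" by (rule size_multiset_overloaded_eq)
    also have "\<dots> \<le> card (set_mset M) * modulus"
      using sum_bounded_above[of "set_mset M" "count M" modulus] reducedD(2)[OF M]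
      by (simp add: less_imp_le)
    also have "\<dots> \<le> card Cs * modulus" using card_mono[OF finite reducedD(1)[OF M]] by simp
    finally show "M \<in> (\<Union>n \<le> card Cs * modulus. multisets_of_size Cs n)"
      unfolding multisets_of_size_def using reducedD(1)[OF M] by auto
  qed
  then show ?thesis using finite_multisets_of_size[OF finite] finite_subset by blast
qed

lemma embeds_into_finite_nat_brace:
  "\<exists>(R :: nat ring) f. finite (carrier R) \<and> brace R \<and> inj_on f Cs \<and> f ` Cs \<subseteq> carrier R \<and>
     (\<forall>y\<in>Cs. \<forall>z\<in>Cs. f (opr y z) = brace_cycle_op R (f y) (f z))"
proof -
  interpret Q: brace_locale quotient_brace
    using brace_quotient_brace by (simp add: brace_iff_brace_locale)
  obtain g :: "'a multiset \<Rightarrow> nat" where g: "inj_on g reduced"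
    using finite_imp_inj_to_nat_seg[OF finite_reduced] by blast
  then have g': "inj_on g (carrier quotient_brace)" by simp
  define f where "f y = g {#y#}" for y
  have "inj_on f Cs"
  proof (rule inj_onI)
    fix y z assume "y \<in> Cs" "z \<in> Cs" "f y = f z"
    then have "{#y#} = {#z#}" using inj_onD[OF g] singleton_in_reduced unfolding f_def by blast
    then show "y = z" by simp
  qed
  moreover have
    "\<forall>y\<in>Cs. \<forall>z\<in>Cs. f (opr y z) = brace_cycle_op (transport g quotient_brace) (f y) (f z)"
    using Q.brace_transport(2)[OF g'] singleton_in_reduced quotient_brace_cycle_op_singleton
    by (simp add: f_def)
  moreover have "f ` Cs \<subseteq> carrier (transport g quotient_brace)"
    using singleton_in_reduced unfolding f_def by auto
  moreover have "finite (carrier (transport g quotient_brace))" using finite_reduced by simp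
  ultimately show ?thesis using Q.brace_transport(1)[OF g'] by blast
qed

end

theorem mainTheorem6:
  fixes Cs :: "'a set" and opr :: "'a \<Rightarrow> 'a \<Rightarrow> 'a" and x :: 'a
  assumes "cycle_set Cs opr" and "finite Cs" and "x \<in> Cs"
  shows "Cs = gen_cycle Cs opr x \<longleftrightarrow>
    (\<exists>(R :: nat ring) (f :: 'a \<Rightarrow> nat).
       finite (carrier R) \<and> brace R \<and>
       inj_on f Cs \<and> f ` Cs \<subseteq> carrier R \<and>
       (\<forall>y\<in>Cs. \<forall>z\<in>Cs. f (opr y z) = brace_cycle_op R (f y) (f z)) \<and>
       f ` Cs = {brace_lambda R b (f x) | b. b \<in> carrier R} \<and>
       carrier R = brace_gen R (f x))"
proof -
  have "Cs = gen_cycle Cs opr x \<longleftrightarrow> (\<exists>(R :: nat ring) f. generated_orbit_embedding R f Cs opr x)"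
  proof
    assume gen: "Cs = gen_cycle Cs opr x"
    interpret finite_cycle_set Cs opr using assms by unfold_locales
    obtain R :: "nat ring" and f where R: "finite (carrier R)" "brace R"
      and f: "inj_on f Cs" "f ` Cs \<subseteq> carrier R"
      and hom: "\<forall>y\<in>Cs. \<forall>z\<in>Cs. f (opr y z) = brace_cycle_op R (f y) (f z)"
      using embeds_into_finite_nat_brace by blast
    interpret brace_locale R using R(2) by (simp add: brace_iff_brace_locale)
    show "\<exists>(R :: nat ring) f. generated_orbit_embedding R f Cs opr x"
      using generated_orbit_embedding_restrict[OF R(1) assms gen f hom] by blast
  next
    assume "\<exists>(R :: nat ring) f. generated_orbit_embedding R f Cs opr x"
    then obtain R :: "nat ring" and f where "generated_orbit_embedding R f Cs opr x" by blast
    then show "Cs = gen_cycle Cs opr x"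
      by (rule gen_cycle_if_generated_orbit_embedding[OF assms(1,3)])
  qed
  then show ?thesis unfolding generated_orbit_embedding_def .
qed

end
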